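(* Let $S_1,\dots,S_m\subseteq N$. Then $\bigcap_{i=1}^m P_{S_i}=P_{\bigcap_{i=1}^m S_i}$ as subgroups of $P_n$.
   Context: $P_n$ denotes the pure braid group on $n$ strands, generated by elements $p_{a,b}$ for $1\le a<b\le n$ subject to the relations: (A) $p_{a,b}p_{a,c}p_{b,c}=p_{a,c}p_{b,c}p_{a,b}=p_{b,c}p_{a,b}p_{a,c}$ for $1\le a<b<c\le n$; (B) $p_{a,b}p_{c,d}=p_{c,d}p_{a,b}$ and $p_{a,d}p_{b,c}=p_{b,c}p_{a,d}$ for $1\le a<b<c<d\le n$; (C) $p_{a,c}p_{b,c}^{-1}p_{b,d}p_{b,c}=p_{b,c}^{-1}p_{b,d}p_{b,c}p_{a,c}$ for $1\le a<b<c<d\le n$. Let $N=\{1,\dots,n\}$. For $S\subseteq N$, $P_S$ is the subgroup of $P_n$ generated by the $p_{a,b}$ with $a\in S$ and $b\in S$ (so $P_\emptyset$ and $P_{\{a\}}$ are trivial). *)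

theory Defs
  imports "HOL-Algebra.Generated_Groups"
begin

text \<open>Pure braid group P_n given by the presentation in the paper:
  words in the letters (e,(a,b)) with 1 <= a < b <= n, where e = True stands for
  p_{a,b} and e = False for its inverse, modulo the congruence generated by free
  cancellation and the relations (A), (B), (C).\<close>

type_synonym pb_letter = "bool \<times> (nat \<times> nat)"
type_synonym pb_word = "pb_letter list"

definition pb_gens :: "nat \<Rightarrow> (nat \<times> nat) set" where
  "pb_gens n = {(a,b). 1 \<le> a \<and> a < b \<and> b \<le> n}"

definition pb_letters :: "nat \<Rightarrow> pb_letter set" where
  "pb_letters n = UNIV \<times> pb_gens n"

definition pb_words :: "nat \<Rightarrow> pb_word set" where
  "pb_words n = lists (pb_letters n)"

definition inv_letter :: "pb_letter \<Rightarrow> pb_letter" where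
  "inv_letter x = (\<not> fst x, snd x)"

abbreviation P :: "nat \<Rightarrow> nat \<Rightarrow> pb_word" where
  "P a b \<equiv> [(True, (a, b))]"

abbreviation Pinv :: "nat \<Rightarrow> nat \<Rightarrow> pb_word" where
  "Pinv a b \<equiv> [(False, (a, b))]"

definition pb_relators :: "nat \<Rightarrow> (pb_word \<times> pb_word) set" where
  "pb_relators n =
     {(P a b @ P a c @ P b c, P a c @ P b c @ P a b) | a b c. 1 \<le> a \<and> a < b \<and> b < c \<and> c \<le> n}
   \<union> {(P a c @ P b c @ P a b, P b c @ P a b @ P a c) | a b c. 1 \<le> a \<and> a < b \<and> b < c \<and> c \<le> n}
   \<union> {(P a b @ P c d, P c d @ P a b) | a b c d. 1 \<le> a \<and> a < b \<and> b < c \<and> c < d \<and> d \<le> n}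
   \<union> {(P a d @ P b c, P b c @ P a d) | a b c d. 1 \<le> a \<and> a < b \<and> b < c \<and> c < d \<and> d \<le> n}
   \<union> {(P a c @ Pinv b c @ P b d @ P b c, Pinv b c @ P b d @ P b c @ P a c) | a b c d.
        1 \<le> a \<and> a < b \<and> b < c \<and> c < d \<and> d \<le> n}"

inductive pb_eq :: "nat \<Rightarrow> pb_word \<Rightarrow> pb_word \<Rightarrow> bool" for n where
  pb_refl: "w \<in> pb_words n \<Longrightarrow> pb_eq n w w"
| pb_sym: "pb_eq n u v \<Longrightarrow> pb_eq n v u"
| pb_trans: "pb_eq n u v \<Longrightarrow> pb_eq n v w \<Longrightarrow> pb_eq n u w"
| pb_cancel: "u \<in> pb_words n \<Longrightarrow> v \<in> pb_words n \<Longrightarrow> x \<in> pb_letters n \<Longrightarrow>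
    pb_eq n (u @ [x, inv_letter x] @ v) (u @ v)"
| pb_rel: "u \<in> pb_words n \<Longrightarrow> v \<in> pb_words n \<Longrightarrow> (r, s) \<in> pb_relators n \<Longrightarrow>
    pb_eq n (u @ r @ v) (u @ s @ v)"

definition pb_rel :: "nat \<Rightarrow> (pb_word \<times> pb_word) set" where
  "pb_rel n = {(u, v). pb_eq n u v}"

definition pure_braid_group :: "nat \<Rightarrow> pb_word set monoid" where
  "pure_braid_group n =
     \<lparr> carrier = pb_words n // pb_rel n,
       mult = (\<lambda>X Y. pb_rel n `` {(SOME x. x \<in> X) @ (SOME y. y \<in> Y)}),
       one = pb_rel n `` {[]} \<rparr>"

definition pgen :: "nat \<Rightarrow> nat \<Rightarrow> nat \<Rightarrow> pb_word set" where
  "pgen n a b = pb_rel n `` {P a b}"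

definition P_sub :: "nat \<Rightarrow> nat set \<Rightarrow> pb_word set set" where
  "P_sub n S = generate (pure_braid_group n)
      {pgen n a b | a b. a \<in> S \<and> b \<in> S \<and> a < b \<and> 1 \<le> a \<and> b \<le> n}"

end

theory Submission
  imports Defs
begin

text \<open>Deleting from a word every letter \<open>p\<^sub>a\<^sub>,\<^sub>b\<^sup>\<plusminus>\<^sup>1\<close> with \<open>a \<notin> S\<close> or \<open>b \<notin> S\<close> (forgetting the
  strands outside \<open>S\<close>) respects free cancellation and every defining relation, so it induces a
  retraction of \<open>P\<^sub>n\<close> onto \<open>P\<^sub>S\<close>. An element of \<open>\<Inter>\<^sub>i P\<^bsub>S\<^sub>i\<^esub>\<close> is fixed by each of these retractions,
  hence by their composite, which is the retraction onto \<open>P\<^bsub>\<Inter>\<^sub>i S\<^sub>i\<^esub>\<close>.\<close>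

abbreviation pb_class :: "nat \<Rightarrow> pb_word \<Rightarrow> pb_word set" where
  "pb_class n w \<equiv> pb_rel n `` {w}"

lemma append_in_pb_words: "u \<in> pb_words n \<Longrightarrow> v \<in> pb_words n \<Longrightarrow> u @ v \<in> pb_words n"
  by (simp add: pb_words_def)

lemma Nil_in_pb_words [simp]: "[] \<in> pb_words n"
  by (simp add: pb_words_def)

lemma filter_in_pb_words: "w \<in> pb_words n \<Longrightarrow> filter p w \<in> pb_words n"
  by (auto simp: pb_words_def)

lemma relator_in_pb_words: "(r, s) \<in> pb_relators n \<Longrightarrow> r \<in> pb_words n \<and> s \<in> pb_words n"
  unfolding pb_relators_def pb_words_def pb_letters_def pb_gens_def
  by auto

lemma pb_eq_imp_pb_words: "pb_eq n u v \<Longrightarrow> u \<in> pb_words n \<and> v \<in> pb_words n"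
proof (induction rule: pb_eq.induct)
  case (pb_cancel u v x)
  then show ?case by (auto simp: pb_words_def pb_letters_def inv_letter_def)
next
  case (pb_rel u v r s)
  then show ?case using relator_in_pb_words[OF pb_rel(3)] by (auto simp: pb_words_def)
qed auto

lemma equiv_pb_rel: "equiv (pb_words n) (pb_rel n)"
  unfolding equiv_def refl_on_def sym_def trans_def pb_rel_def
  using pb_eq_imp_pb_words by (auto intro: pb_eq.intros)

lemma pb_class_eq_iff:
  "u \<in> pb_words n \<Longrightarrow> v \<in> pb_words n \<Longrightarrow> pb_class n u = pb_class n v \<longleftrightarrow> pb_eq n u v"
  using eq_equiv_class_iff[OF equiv_pb_rel, of u n v] by (simp add: pb_rel_def)

lemma pb_eq_append_right:
  "pb_eq n u u' \<Longrightarrow> v \<in> pb_words n \<Longrightarrow> pb_eq n (u @ v) (u' @ v)"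
proof (induction rule: pb_eq.induct)
  case (pb_refl w)
  then show ?case by (auto intro: pb_eq.intros simp: pb_words_def)
next
  case (pb_cancel u v0 x)
  then show ?case using pb_eq.pb_cancel[of u n "v0 @ v" x] by (auto simp: pb_words_def)
next
  case (pb_rel u v0 r s)
  then show ?case using pb_eq.pb_rel[of u n "v0 @ v" r s] by (auto simp: pb_words_def)
qed (auto intro: pb_eq.intros)

lemma pb_eq_append_left:
  "pb_eq n v v' \<Longrightarrow> u \<in> pb_words n \<Longrightarrow> pb_eq n (u @ v) (u @ v')"
proof (induction rule: pb_eq.induct)
  case (pb_refl w)
  then show ?case by (auto intro: pb_eq.intros simp: pb_words_def)
next
  case (pb_cancel u0 v0 x)
  then show ?case using pb_eq.pb_cancel[of "u @ u0" n v0 x] by (auto simp: pb_words_def)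
next
  case (pb_rel u0 v0 r s)
  then show ?case using pb_eq.pb_rel[of "u @ u0" n v0 r s] by (auto simp: pb_words_def)
qed (auto intro: pb_eq.intros)

lemma pb_eq_append: "pb_eq n u u' \<Longrightarrow> pb_eq n v v' \<Longrightarrow> pb_eq n (u @ v) (u' @ v')"
  by (meson pb_eq.pb_trans pb_eq_append_left pb_eq_append_right pb_eq_imp_pb_words)

definition word_inv :: "pb_word \<Rightarrow> pb_word" where
  "word_inv w = rev (map inv_letter w)"

lemma word_inv_in_pb_words: "w \<in> pb_words n \<Longrightarrow> word_inv w \<in> pb_words n"
  by (force simp: word_inv_def pb_words_def pb_letters_def inv_letter_def)

lemma pb_eq_word_inv_append: "w \<in> pb_words n \<Longrightarrow> pb_eq n (word_inv w @ w) []"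
proof (induction w)
  case Nil
  then show ?case by (simp add: word_inv_def pb_refl pb_words_def)
next
  case (Cons x w)
  have x: "x \<in> pb_letters n" and w: "w \<in> pb_words n"
    using Cons.prems by (auto simp: pb_words_def)
  have x': "inv_letter x \<in> pb_letters n" "inv_letter (inv_letter x) = x"
    using x by (auto simp: pb_letters_def inv_letter_def)
  have "pb_eq n (word_inv w @ [inv_letter x, inv_letter (inv_letter x)] @ w) (word_inv w @ w)"
    using word_inv_in_pb_words[OF w] w x' by (intro pb_cancel)
  then have "pb_eq n (word_inv (x # w) @ x # w) (word_inv w @ w)"
    using x' by (simp add: word_inv_def)
  then show ?case using Cons.IH w pb_trans by blast
qed

lemma carrier_pure_braid_group:
  "carrier (pure_braid_group n) = {pb_class n w | w. w \<in> pb_words n}"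
  by (auto simp: pure_braid_group_def quotient_def)

lemma one_pure_braid_group: "\<one>\<^bsub>pure_braid_group n\<^esub> = pb_class n []"
  by (simp add: pure_braid_group_def)

lemma pb_eq_some_in_pb_class: "u \<in> pb_words n \<Longrightarrow> pb_eq n u (SOME x. x \<in> pb_class n u)"
proof -
  assume "u \<in> pb_words n"
  then have "u \<in> pb_class n u"
    by (simp add: pb_rel_def pb_eq.pb_refl)
  then have "(SOME x. x \<in> pb_class n u) \<in> pb_class n u"
    by (rule someI)
  then show ?thesis
    by (simp add: pb_rel_def)
qed

lemma mult_pb_class:
  assumes "u \<in> pb_words n" "v \<in> pb_words n"
  shows "pb_class n u \<otimes>\<^bsub>pure_braid_group n\<^esub> pb_class n v = pb_class n (u @ v)"
proof -
  have "pb_eq n ((SOME x. x \<in> pb_class n u) @ (SOME x. x \<in> pb_class n v)) (u @ v)"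
    using pb_eq_append[OF pb_eq_some_in_pb_class pb_eq_some_in_pb_class] assms
    by (blast intro: pb_eq.pb_sym)
  then have "pb_class n ((SOME x. x \<in> pb_class n u) @ (SOME x. x \<in> pb_class n v)) = pb_class n (u @ v)"
    using pb_class_eq_iff pb_eq_imp_pb_words by blast
  then show ?thesis
    by (simp add: pure_braid_group_def)
qed

lemma mult_pb_class_word_inv:
  assumes "w \<in> pb_words n"
  shows "pb_class n (word_inv w) \<otimes>\<^bsub>pure_braid_group n\<^esub> pb_class n w = \<one>\<^bsub>pure_braid_group n\<^esub>"
  using pb_eq_word_inv_append[OF assms] word_inv_in_pb_words[OF assms] assms
  by (simp add: mult_pb_class one_pure_braid_group pb_class_eq_iff append_in_pb_words)

lemma group_pure_braid_group: "group (pure_braid_group n)"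
proof (rule groupI)
  fix x y
  assume "x \<in> carrier (pure_braid_group n)" "y \<in> carrier (pure_braid_group n)"
  then show "x \<otimes>\<^bsub>pure_braid_group n\<^esub> y \<in> carrier (pure_braid_group n)"
    unfolding carrier_pure_braid_group using mult_pb_class append_in_pb_words by blast
next
  show "\<one>\<^bsub>pure_braid_group n\<^esub> \<in> carrier (pure_braid_group n)"
    unfolding carrier_pure_braid_group one_pure_braid_group by (auto simp: pb_words_def)
next
  fix x y z
  assume "x \<in> carrier (pure_braid_group n)" "y \<in> carrier (pure_braid_group n)"
    "z \<in> carrier (pure_braid_group n)"
  then show "x \<otimes>\<^bsub>pure_braid_group n\<^esub> y \<otimes>\<^bsub>pure_braid_group n\<^esub> z =
      x \<otimes>\<^bsub>pure_braid_group n\<^esub> (y \<otimes>\<^bsub>pure_braid_group n\<^esub> z)"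
    unfolding carrier_pure_braid_group by (auto simp: mult_pb_class append_in_pb_words)
next
  fix x
  assume "x \<in> carrier (pure_braid_group n)"
  then show "\<one>\<^bsub>pure_braid_group n\<^esub> \<otimes>\<^bsub>pure_braid_group n\<^esub> x = x"
    unfolding carrier_pure_braid_group one_pure_braid_group
    using mult_pb_class[of "[]" n] by (auto simp: pb_words_def)
next
  fix x
  assume "x \<in> carrier (pure_braid_group n)"
  then obtain w where w: "w \<in> pb_words n" "x = pb_class n w"
    unfolding carrier_pure_braid_group by blast
  then have "pb_class n (word_inv w) \<otimes>\<^bsub>pure_braid_group n\<^esub> x = \<one>\<^bsub>pure_braid_group n\<^esub>"
    by (simp add: mult_pb_class_word_inv)
  moreover have "pb_class n (word_inv w) \<in> carrier (pure_braid_group n)"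
    using word_inv_in_pb_words[OF w(1)] unfolding carrier_pure_braid_group by blast
  ultimately show "\<exists>y \<in> carrier (pure_braid_group n).
      y \<otimes>\<^bsub>pure_braid_group n\<^esub> x = \<one>\<^bsub>pure_braid_group n\<^esub>"
    by blast
qed

lemma inv_pb_class:
  assumes "w \<in> pb_words n"
  shows "inv\<^bsub>pure_braid_group n\<^esub> (pb_class n w) = pb_class n (word_inv w)"
proof (rule group.inv_equality[OF group_pure_braid_group])
  show "pb_class n (word_inv w) \<otimes>\<^bsub>pure_braid_group n\<^esub> pb_class n w = \<one>\<^bsub>pure_braid_group n\<^esub>"
    using assms by (rule mult_pb_class_word_inv)
qed (use assms word_inv_in_pb_words in \<open>auto simp: carrier_pure_braid_group\<close>)

definition strands_in :: "nat set \<Rightarrow> pb_letter \<Rightarrow> bool" where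
  "strands_in S x \<longleftrightarrow> fst (snd x) \<in> S \<and> snd (snd x) \<in> S"

lemma strands_in_inv_letter [simp]: "strands_in S (inv_letter x) = strands_in S x"
  by (simp add: strands_in_def inv_letter_def)

lemma P_sub_subset_pb_classes:
  "P_sub n S \<subseteq> {pb_class n w | w. w \<in> pb_words n \<and> (\<forall>x \<in> set w. strands_in S x)}"
proof
  have gen: "P a b \<in> pb_words n \<and> (\<forall>x \<in> set (P a b). strands_in S x)"
    if "a \<in> S" "b \<in> S" "a < b" "1 \<le> a" "b \<le> n" for a b
    using that by (auto simp: pb_words_def pb_letters_def pb_gens_def strands_in_def)
  fix X
  assume "X \<in> P_sub n S"
  then show "X \<in> {pb_class n w | w. w \<in> pb_words n \<and> (\<forall>x \<in> set w. strands_in S x)}"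
    unfolding P_sub_def
  proof (induction rule: generate.induct)
    case one
    then show ?case by (auto simp: one_pure_braid_group)
  next
    case (incl h)
    then obtain a b where "h = pgen n a b" "a \<in> S" "b \<in> S" "a < b" "1 \<le> a" "b \<le> n"
      by blast
    with gen[of a b] show ?case by (auto simp: pgen_def)
  next
    case (inv h)
    then obtain a b where "h = pgen n a b" "a \<in> S" "b \<in> S" "a < b" "1 \<le> a" "b \<le> n"
      by blast
    with gen[of a b] show ?case
      by (auto simp: pgen_def inv_pb_class intro!: exI[of _ "word_inv (P a b)"] word_inv_in_pb_words)
         (auto simp: word_inv_def strands_in_def inv_letter_def)
  next
    case (eng h1 h2)
    then obtain u v where "h1 = pb_class n u" "u \<in> pb_words n" "\<forall>x \<in> set u. strands_in S x"
      "h2 = pb_class n v" "v \<in> pb_words n" "\<forall>x \<in> set v. strands_in S x" by blast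
    then show ?case
      by (intro CollectI exI[of _ "u @ v"]) (auto simp: mult_pb_class append_in_pb_words)
  qed
qed

lemma pb_class_letter_in_P_sub:
  assumes x: "x \<in> pb_letters n" "strands_in S x"
  shows "pb_class n [x] \<in> P_sub n S"
proof -
  obtain e a b where x_eq: "x = (e, (a, b))" by (cases x)
  have ab: "P a b \<in> pb_words n"
    and gen: "pgen n a b \<in> {pgen n a b | a b. a \<in> S \<and> b \<in> S \<and> a < b \<and> 1 \<le> a \<and> b \<le> n}"
    using x x_eq by (auto simp: pb_words_def pb_letters_def pb_gens_def strands_in_def)
  show ?thesis
  proof (cases e)
    case True
    then show ?thesis unfolding P_sub_def using generate.incl[OF gen] x_eq by (simp add: pgen_def)
  next
    case False
    then show ?thesis
      unfolding P_sub_def using generate.inv[OF gen, of "pure_braid_group n"] x_eq ab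
      by (simp add: pgen_def inv_pb_class word_inv_def inv_letter_def)
  qed
qed

lemma pb_class_in_P_sub:
  "w \<in> pb_words n \<Longrightarrow> \<forall>x \<in> set w. strands_in S x \<Longrightarrow> pb_class n w \<in> P_sub n S"
proof (induction w)
  case Nil
  show ?case unfolding P_sub_def one_pure_braid_group[symmetric] by (rule generate.one)
next
  case (Cons x w)
  have x: "[x] \<in> pb_words n" and w: "w \<in> pb_words n"
    using Cons.prems by (auto simp: pb_words_def)
  have "pb_class n [x] \<otimes>\<^bsub>pure_braid_group n\<^esub> pb_class n w \<in> P_sub n S"
    using Cons pb_class_letter_in_P_sub[of x n S] unfolding P_sub_def
    by (auto simp: pb_words_def intro: generate.eng)
  then show ?case using mult_pb_class[OF x w] by simp
qed

lemma P_sub_eq_pb_classes: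
  "P_sub n S = {pb_class n w | w. w \<in> pb_words n \<and> (\<forall>x \<in> set w. strands_in S x)}"
  using P_sub_subset_pb_classes pb_class_in_P_sub by blast

lemma P_sub_subset_carrier: "P_sub n S \<subseteq> carrier (pure_braid_group n)"
  unfolding P_sub_def
proof (rule group.generate_incl[OF group_pure_braid_group], safe)
  fix a b
  assume "1 \<le> a" "a < b" "b \<le> n"
  then have "P a b \<in> pb_words n"
    by (auto simp: pb_words_def pb_letters_def pb_gens_def)
  then show "pgen n a b \<in> carrier (pure_braid_group n)"
    by (auto simp: pgen_def carrier_pure_braid_group)
qed

lemma P_sub_mono: "S \<subseteq> T \<Longrightarrow> P_sub n S \<subseteq> P_sub n T"
  unfolding P_sub_def by (rule group.mono_generate[OF group_pure_braid_group]) blast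

subsection \<open>Forgetting strands\<close>

text \<open>Only the relation (C) with \<open>d \<notin> S\<close> needs cancellation: its two sides become
  \<open>p\<^sub>a\<^sub>,\<^sub>c p\<^sub>b\<^sub>,\<^sub>c\<^sup>-\<^sup>1 p\<^sub>b\<^sub>,\<^sub>c\<close> and \<open>p\<^sub>b\<^sub>,\<^sub>c\<^sup>-\<^sup>1 p\<^sub>b\<^sub>,\<^sub>c p\<^sub>a\<^sub>,\<^sub>c\<close>. Otherwise both sides are kept, or become equal.\<close>

lemma pb_eq_filter_strands_in_relator:
  assumes rs: "(r, s) \<in> pb_relators n"
  shows "pb_eq n (filter (strands_in S) r) (filter (strands_in S) s)"
proof -
  have words: "r \<in> pb_words n" "s \<in> pb_words n"
    using relator_in_pb_words[OF rs] by auto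
  have "(filter (strands_in S) r = r \<and> filter (strands_in S) s = s)
    \<or> filter (strands_in S) r = filter (strands_in S) s
    \<or> (\<exists>a b c. filter (strands_in S) r = P a c @ [(False, (b, c)), (True, (b, c))] \<and>
          filter (strands_in S) s = [(False, (b, c)), (True, (b, c))] @ P a c \<and>
          (a, c) \<in> pb_gens n \<and> (b, c) \<in> pb_gens n)"
    using rs unfolding pb_relators_def
    by (elim UnE CollectE exE conjE) (auto simp: strands_in_def pb_gens_def)
  then show ?thesis
  proof (elim disjE exE conjE)
    assume "filter (strands_in S) r = r" "filter (strands_in S) s = s"
    then show ?thesis using pb_eq.pb_rel[of "[]" n "[]" r s] rs by (simp add: pb_words_def)
  next
    assume "filter (strands_in S) r = filter (strands_in S) s"
    then show ?thesis using filter_in_pb_words[OF words(2)] by (simp add: pb_refl)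
  next
    fix a b c
    assume r': "filter (strands_in S) r = P a c @ [(False, (b, c)), (True, (b, c))]"
      and s': "filter (strands_in S) s = [(False, (b, c)), (True, (b, c))] @ P a c"
      and "(a, c) \<in> pb_gens n" "(b, c) \<in> pb_gens n"
    then have x: "(False, (b, c)) \<in> pb_letters n" "inv_letter (False, (b, c)) = (True, (b, c))"
      and ac: "P a c \<in> pb_words n"
      by (auto simp: pb_letters_def inv_letter_def pb_words_def)
    have "pb_eq n (P a c @ [(False, (b, c)), (True, (b, c))] @ []) (P a c @ [])"
      using pb_cancel[OF ac Nil_in_pb_words x(1)] x(2) by simp
    moreover have "pb_eq n ([] @ [(False, (b, c)), (True, (b, c))] @ P a c) ([] @ P a c)"
      using pb_cancel[OF Nil_in_pb_words ac x(1)] x(2) by simp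
    ultimately show ?thesis
      unfolding r' s' by (auto intro: pb_eq.pb_sym pb_eq.pb_trans)
  qed
qed

lemma pb_eq_filter_strands_in:
  "pb_eq n u v \<Longrightarrow> pb_eq n (filter (strands_in S) u) (filter (strands_in S) v)"
proof (induction rule: pb_eq.induct)
  case (pb_refl w)
  then show ?case by (simp add: filter_in_pb_words pb_eq.pb_refl)
next
  case (pb_cancel u v x)
  then show ?case
    using pb_eq.pb_cancel[OF filter_in_pb_words[OF pb_cancel(1)] filter_in_pb_words[OF pb_cancel(2)]]
    by (cases "strands_in S x") (simp_all add: pb_eq.pb_refl filter_in_pb_words append_in_pb_words)
next
  case (pb_rel u v r s)
  have "pb_eq n (filter (strands_in S) u) (filter (strands_in S) u)"
    "pb_eq n (filter (strands_in S) v) (filter (strands_in S) v)"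
    using pb_rel(1,2) by (simp_all add: filter_in_pb_words pb_eq.pb_refl)
  then show ?case
    using pb_eq_filter_strands_in_relator[OF pb_rel(3)] by (simp add: pb_eq_append)
qed (blast intro: pb_eq.intros)+

lemma pb_class_filter_strands_in:
  assumes w: "w \<in> pb_words n" and "pb_class n w \<in> P_sub n S"
  shows "pb_class n (filter (strands_in S) w) = pb_class n w"
proof -
  obtain u where u: "pb_class n w = pb_class n u" "u \<in> pb_words n" "\<forall>x \<in> set u. strands_in S x"
    using assms(2) by (auto simp: P_sub_eq_pb_classes)
  have "pb_eq n (filter (strands_in S) w) (filter (strands_in S) u)"
    using u w by (intro pb_eq_filter_strands_in) (simp add: pb_class_eq_iff)
  moreover have "filter (strands_in S) u = u"
    using u(3) by simp
  ultimately show ?thesis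
    using u w filter_in_pb_words pb_class_eq_iff by metis
qed

lemma P_sub_Int: "P_sub n (A \<inter> B) = P_sub n A \<inter> P_sub n B"
proof
  show "P_sub n (A \<inter> B) \<subseteq> P_sub n A \<inter> P_sub n B"
    using P_sub_mono[of "A \<inter> B"] by blast
  show "P_sub n A \<inter> P_sub n B \<subseteq> P_sub n (A \<inter> B)"
  proof
    fix X
    assume X: "X \<in> P_sub n A \<inter> P_sub n B"
    then obtain w where w: "w \<in> pb_words n" "X = pb_class n w"
      using P_sub_subset_carrier by (force simp: carrier_pure_braid_group)
    let ?wA = "filter (strands_in A) w"
    have "pb_class n ?wA = X"
      using pb_class_filter_strands_in w X by blast
    then have "pb_class n (filter (strands_in B) ?wA) = X"
      using pb_class_filter_strands_in[OF filter_in_pb_words[OF w(1)]] X by simp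
    moreover have "filter (strands_in B) ?wA = filter (strands_in (A \<inter> B)) w"
      by (auto simp: strands_in_def intro: filter_cong)
    ultimately show "X \<in> P_sub n (A \<inter> B)"
      using pb_class_in_P_sub[OF filter_in_pb_words[OF w(1)], of "strands_in (A \<inter> B)"] by simp
  qed
qed

lemma P_sub_eq_carrier:
  assumes "{1..n} \<subseteq> S"
  shows "P_sub n S = carrier (pure_braid_group n)"
proof
  have "strands_in S x" if "x \<in> pb_letters n" for x
    using that assms by (auto simp: pb_letters_def pb_gens_def strands_in_def subset_iff)
  then have "\<forall>x \<in> set w. strands_in S x" if "w \<in> pb_words n" for w
    using that by (auto simp: pb_words_def)
  then show "carrier (pure_braid_group n) \<subseteq> P_sub n S"
    using pb_class_in_P_sub by (auto simp: carrier_pure_braid_group)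
qed (rule P_sub_subset_carrier)

lemma P_sub_INT:
  "finite I \<Longrightarrow> P_sub n (\<Inter>i \<in> I. S i) = carrier (pure_braid_group n) \<inter> (\<Inter>i \<in> I. P_sub n (S i))"
proof (induction I rule: finite_induct)
  case empty
  then show ?case by (simp add: P_sub_eq_carrier)
next
  case (insert i I)
  have "P_sub n (\<Inter>i \<in> insert i I. S i) = P_sub n (S i) \<inter> P_sub n (\<Inter>i \<in> I. S i)"
    by (simp add: P_sub_Int)
  then show ?case
    using insert.IH P_sub_subset_carrier[of n "S i"] by blast
qed

theorem proposition1p2:
  fixes n m :: nat and S :: "nat \<Rightarrow> nat set"
  assumes "\<forall>i \<in> {1..m}. S i \<subseteq> {1..n}"
  shows "carrier (pure_braid_group n) \<inter> (\<Inter>i \<in> {1..m}. P_sub n (S i))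
           = P_sub n ({1..n} \<inter> (\<Inter>i \<in> {1..m}. S i))"
proof -
  have "P_sub n ({1..n} \<inter> (\<Inter>i \<in> {1..m}. S i)) = P_sub n {1..n} \<inter> P_sub n (\<Inter>i \<in> {1..m}. S i)"
    by (rule P_sub_Int)
  also have "\<dots> = carrier (pure_braid_group n) \<inter> (\<Inter>i \<in> {1..m}. P_sub n (S i))"
    unfolding P_sub_eq_carrier[OF order_refl] P_sub_INT[OF finite_atLeastAtMost] by blast
  finally show ?thesis ..
qed

end
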